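(* Let $\overline\tau$ be a real random variable with probability density $f_{\overline\tau}$ and $\mathbb E|\overline\tau|<\infty$, let $s_n>0$, and define $\overline\theta=\mathbb E[\overline\tau\,\mathbf 1\{\overline\tau>0\}]$ and $\overline\theta_{\mathrm{sig}}=\mathbb E\left[\dfrac{\overline\tau}{1+\exp(-s_n\overline\tau)}\right]$. Let $f_U$ be the density of a logistic random variable $U\sim\mathrm{Logistic}(0,1/s_n)$ (location $0$, scale $1/s_n$), i.e. $f_U(u)=\dfrac{s_ne^{-s_nu}}{(1+e^{-s_nu})^2}$, with $U$ independent of $\overline\tau$. Then \[ \overline\theta_{\mathrm{sig}}-\overline\theta=-\int_0^\infty f_U(u)\left[\int_0^u t f_{\overline\tau}(t)\,dt-\int_{-u}^0 t f_{\overline\tau}(t)\,dt\right]du. \]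
   Context: In the paper, $\overline\tau=\overline\tau(X)=\overline\gamma_1(X)-\overline\gamma_2(X)$ is the conditional average treatment effect, $\overline\gamma_1(X)=\mathbb E[Y\mid Z,D=1]$, $\overline\gamma_2(X)=\mathbb E[Y\mid Z,D=0]$; $\overline\theta$ is the maximized average welfare gain and $\overline\theta_{\mathrm{sig}}$ its sigmoid-smoothed version with smoothing parameter $s_n$. *)

theory Defs
  imports "HOL-Probability.Probability"
begin

definition logistic_density :: "real \<Rightarrow> real \<Rightarrow> real" where
  "logistic_density s u = s * exp (- s * u) / (1 + exp (- s * u))^2"

end

theory Submission
  imports Defs
begin

text \<open>
  If U is logistic with scale 1/s and independent of \<tau>, then the sigmoid weight
  1 / (1 + exp (-s t)) equals P(U > -t), so it differs from the indicator of t > 0 by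
  -P(U \<ge> t) for t > 0 and by P(U \<ge> -t) for t < 0. Hence the weight difference at t is minus
  the mixture over u \<ge> 0, with weight f_U(u), of the signed window
  1{0 \<le> t \<le> u} - 1{-u \<le> t \<le> 0}. Integrating t f(t) against it and exchanging the two
  integrals (Fubini, justified since the window is bounded and t f(t) is integrable) gives
  the formula.
\<close>

lemma (in pair_sigma_finite) integrable_mult_fst_snd:
  fixes p :: "'a \<Rightarrow> real" and g :: "'b \<Rightarrow> real"
  assumes p: "integrable M1 p" and g: "integrable M2 g"
  shows "integrable (M1 \<Otimes>\<^sub>M M2) (\<lambda>(x, y). p x * g y)"
proof (rule Fubini_integrable)
  have [measurable]: "p \<in> borel_measurable M1" "g \<in> borel_measurable M2"
    using p g by auto
  show "(\<lambda>(x, y). p x * g y) \<in> borel_measurable (M1 \<Otimes>\<^sub>M M2)"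
    by measurable
  have "(\<lambda>x. \<integral>y. norm (p x * g y) \<partial>M2) = (\<lambda>x. \<bar>p x\<bar> * (\<integral>y. \<bar>g y\<bar> \<partial>M2))"
    by (simp add: abs_mult)
  then show "integrable M1 (\<lambda>x. \<integral>y. norm (case_prod (\<lambda>x y. p x * g y) (x, y)) \<partial>M2)"
    using p by simp
  show "AE x in M1. integrable M2 (\<lambda>y. case_prod (\<lambda>x y. p x * g y) (x, y))"
    using g by simp
qed

lemma (in pair_sigma_finite) integral_swap_bounded_kernel:
  fixes p :: "'a \<Rightarrow> real" and g :: "'b \<Rightarrow> real" and K :: "'a \<Rightarrow> 'b \<Rightarrow> real"
  assumes p: "integrable M1 p" and g: "integrable M2 g"
    and K: "case_prod K \<in> borel_measurable (M1 \<Otimes>\<^sub>M M2)"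
    and K_bound: "\<And>x y. \<bar>K x y\<bar> \<le> 1"
  shows "(\<integral>x. p x * (\<integral>y. g y * K x y \<partial>M2) \<partial>M1) = (\<integral>y. g y * (\<integral>x. p x * K x y \<partial>M1) \<partial>M2)"
proof -
  have [measurable]: "p \<in> borel_measurable M1" "g \<in> borel_measurable M2"
    using p g by auto
  have "integrable (M1 \<Otimes>\<^sub>M M2) (\<lambda>(x, y). p x * g y * K x y)"
  proof (rule Bochner_Integration.integrable_bound[OF integrable_mult_fst_snd[OF p g]])
    show "AE z in M1 \<Otimes>\<^sub>M M2. norm (case_prod (\<lambda>x y. p x * g y * K x y) z) \<le> norm (case_prod (\<lambda>x y. p x * g y) z)"
      using K_bound by (intro AE_I2) (auto simp: abs_mult split: prod.split intro!: mult_left_le)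
  qed (use K in measurable)
  from Fubini_integral[OF this]
  have "(\<integral>y. (\<integral>x. g y * (p x * K x y) \<partial>M1) \<partial>M2) = (\<integral>x. (\<integral>y. p x * (g y * K x y) \<partial>M2) \<partial>M1)"
    by (simp add: mult_ac)
  then show ?thesis
    by (simp only: integral_mult_right_zero)
qed

lemma integrable_mult_bounded_comp:
  fixes X :: "'a \<Rightarrow> real"
  assumes X: "integrable M X" and [measurable]: "h \<in> borel_measurable borel"
    and h_bound: "\<And>t. \<bar>h t\<bar> \<le> B"
  shows "integrable M (\<lambda>\<omega>. X \<omega> * h (X \<omega>))"
proof (rule Bochner_Integration.integrable_bound[OF integrable_mult_right[OF X, of B]])
  have "\<bar>X \<omega>\<bar> * \<bar>h (X \<omega>)\<bar> \<le> B * \<bar>X \<omega>\<bar>" for \<omega>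
    using mult_left_mono[OF h_bound abs_ge_zero] by (simp add: mult.commute)
  moreover have "0 \<le> B"
    using h_bound[of 0] by linarith
  ultimately show "AE \<omega> in M. norm (X \<omega> * h (X \<omega>)) \<le> norm (B * X \<omega>)"
    by (simp add: abs_mult)
qed (use X in auto)

lemma one_add_exp_pos [simp]: "0 < 1 + exp (x::real)"
  using exp_gt_zero[of x] by linarith

lemmas one_add_exp_neq_zero [simp] = one_add_exp_pos[THEN less_imp_neq, symmetric]

lemma logistic_density_nonneg: "0 \<le> s \<Longrightarrow> 0 \<le> logistic_density s u"
  by (simp add: logistic_density_def)

lemma borel_measurable_logistic_density [measurable]:
  "logistic_density s \<in> borel_measurable borel"
  unfolding logistic_density_def by measurable

lemma logistic_density_has_real_derivative:
  "((\<lambda>x. - 1 / (1 + exp (s * x))) has_real_derivative logistic_density s x) (at x)"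
proof -
  have "logistic_density s x = s * exp (s * x) / (1 + exp (s * x))^2"
    unfolding logistic_density_def by (simp add: exp_minus field_simps power2_eq_square)
  moreover have "((\<lambda>x. - 1 / (1 + exp (s * x))) has_real_derivative
      s * exp (s * x) / (1 + exp (s * x))^2) (at x)"
    by (auto intro!: derivative_eq_intros simp: power2_eq_square)
  ultimately show ?thesis by simp
qed

lemma
  assumes "0 < s"
  shows set_integrable_logistic_density_Ici: "set_integrable lborel {a..} (logistic_density s)"
    and set_integral_logistic_density_Ici: "(LBINT u:{a..}. logistic_density s u) = 1 / (1 + exp (s * a))"
proof -
  let ?F = "\<lambda>x. - 1 / (1 + exp (s * x))"
  have lim_a: "((?F \<circ> real_of_ereal) \<longlongrightarrow> ?F a) (at_right (ereal a))"
    unfolding ereal_tendsto_simps by (auto intro!: tendsto_eq_intros)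
  have lim_infinity: "((?F \<circ> real_of_ereal) \<longlongrightarrow> 0) (at_left \<infinity>)"
    unfolding ereal_tendsto_simps using \<open>0 < s\<close> by real_asymp
  have cont: "isCont (logistic_density s) x" for x
    unfolding logistic_density_def by (intro continuous_intros) simp_all
  note FTC = interval_integral_FTC_nonneg[OF _ logistic_density_has_real_derivative cont _ lim_a lim_infinity]
  have Ioi: "einterval a \<infinity> = {a<..}"
    by (auto simp: einterval_def)
  have "set_integrable lborel {a<..} (logistic_density s)"
    using FTC(1) logistic_density_nonneg \<open>0 < s\<close> by (simp add: Ioi)
  then show "set_integrable lborel {a..} (logistic_density s)"
    by (subst set_integrable_discrete_difference[of "{a}" _ "{a<..}"]) auto
  have "(LBINT u:{a<..}. logistic_density s u) = 1 / (1 + exp (s * a))"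
    using FTC(2) logistic_density_nonneg \<open>0 < s\<close> by (simp add: interval_integral_to_infinity_eq)
  then show "(LBINT u:{a..}. logistic_density s u) = 1 / (1 + exp (s * a))"
    by (subst set_integral_discrete_difference[of "{a}" _ "{a<..}"]) auto
qed

definition signed_window :: "real \<Rightarrow> real \<Rightarrow> real" where
  "signed_window u t = indicator {0..u} t - indicator {-u..0} t"

lemma abs_signed_window_le: "\<bar>signed_window u t\<bar> \<le> 1"
  by (simp add: signed_window_def indicator_def)

lemma borel_measurable_signed_window:
  "case_prod signed_window \<in> borel_measurable (lborel \<Otimes>\<^sub>M lborel)"
  unfolding signed_window_def indicator_def atLeastAtMost_iff by measurable

lemma integral_mult_signed_window:
  fixes g :: "real \<Rightarrow> real"
  assumes "integrable lborel g"
  shows "(\<integral>t. g t * signed_window u t \<partial>lborel) = (LBINT t:{0..u}. g t) - (LBINT t:{-u..0}. g t)"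
  using integrable_mult_indicator[OF _ assms, of "{0..u}"] integrable_mult_indicator[OF _ assms, of "{-u..0}"]
  unfolding set_lebesgue_integral_def signed_window_def
  by (subst Bochner_Integration.integral_diff[symmetric])
     (auto intro!: Bochner_Integration.integral_cong simp: algebra_simps)

text \<open>At t = 0 the two windows cancel, whereas the right-hand side is -1/2.\<close>

lemma set_integral_logistic_density_signed_window:
  assumes "0 < s" and "t \<noteq> 0"
  shows "(LBINT u:{0..}. logistic_density s u * signed_window u t)
       = indicator {0<..} t - 1 / (1 + exp (- s * t))"
proof (cases "0 < t")
  case True
  have "(LBINT u:{0..}. logistic_density s u * signed_window u t) = (LBINT u:{t..}. logistic_density s u)"
    unfolding set_lebesgue_integral_def using True
    by (intro Bochner_Integration.integral_cong) (auto simp: signed_window_def indicator_def)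
  also have "\<dots> = 1 - 1 / (1 + exp (- s * t))"
    using \<open>0 < s\<close> by (simp add: set_integral_logistic_density_Ici exp_minus field_simps)
  finally show ?thesis
    using True by simp
next
  case False
  then have "t < 0"
    using \<open>t \<noteq> 0\<close> by simp
  have "(LBINT u:{0..}. logistic_density s u * signed_window u t) = - (LBINT u:{-t..}. logistic_density s u)"
    unfolding set_lebesgue_integral_def Bochner_Integration.integral_minus[symmetric] using \<open>t < 0\<close>
    by (intro Bochner_Integration.integral_cong) (auto simp: signed_window_def indicator_def)
  also have "\<dots> = - (1 / (1 + exp (- s * t)))"
    using \<open>0 < s\<close> by (simp add: set_integral_logistic_density_Ici)
  finally show ?thesis
    using \<open>t < 0\<close> by simp
qed

lemma set_integral_logistic_mixture_signed_window:
  fixes g :: "real \<Rightarrow> real"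
  assumes "0 < s" and g: "integrable lborel g"
  shows "(LBINT u:{0..}. logistic_density s u * ((LBINT t:{0..u}. g t) - (LBINT t:{-u..0}. g t)))
       = (\<integral>t. g t * (indicator {0<..} t - 1 / (1 + exp (- s * t))) \<partial>lborel)"
proof -
  have density_int: "integrable lborel (\<lambda>u. indicator {0..} u * logistic_density s u)"
    using set_integrable_logistic_density_Ici[OF \<open>0 < s\<close>, of 0] by (simp add: set_integrable_def)
  have "(LBINT u:{0..}. logistic_density s u * ((LBINT t:{0..u}. g t) - (LBINT t:{-u..0}. g t)))
      = (\<integral>t. g t * (LBINT u:{0..}. logistic_density s u * signed_window u t) \<partial>lborel)"
    using lborel_pair.integral_swap_bounded_kernel[OF density_int g
        borel_measurable_signed_window abs_signed_window_le]
    by (simp add: integral_mult_signed_window[OF g] set_lebesgue_integral_def mult.assoc)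
  also have "\<dots> = (\<integral>t. g t * (indicator {0<..} t - 1 / (1 + exp (- s * t))) \<partial>lborel)"
    by (intro integral_discrete_difference[where X = "{0}"])
       (auto simp: set_integral_logistic_density_signed_window[OF \<open>0 < s\<close>])
  finally show ?thesis .
qed

theorem proposition2:
  fixes M :: "'a measure" and tau :: "'a \<Rightarrow> real" and f :: "real \<Rightarrow> real" and s :: real
  assumes "prob_space M"
    and "\<And>t. 0 \<le> f t"
    and "distributed M lborel tau (\<lambda>t. ennreal (f t))"
    and "integrable M tau"
    and "0 < s"
  shows "prob_space.expectation M (\<lambda>\<omega>. tau \<omega> / (1 + exp (- s * tau \<omega>)))
         - prob_space.expectation M (\<lambda>\<omega>. tau \<omega> * indicator {0<..} (tau \<omega>))
       = - (LBINT u:{0..}. logistic_density s u *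
              ((LBINT t:{0..u}. t * f t) - (LBINT t:{-u..0}. t * f t)))"
proof -
  note f_nonneg = assms(2) and distr = assms(3) and tau_int = assms(4) and s_pos = assms(5)
  define sigmoid where "sigmoid t = 1 / (1 + exp (- s * t))" for t
  have [measurable]: "f \<in> borel_measurable borel"
    using distributed_real_measurable[OF _ distr] f_nonneg by simp
  have sigmoid_int: "integrable M (\<lambda>\<omega>. tau \<omega> * sigmoid (tau \<omega>))"
    by (rule integrable_mult_bounded_comp[OF tau_int, of _ 1]) (simp_all add: sigmoid_def divide_le_eq_1)
  have indicator_int: "integrable M (\<lambda>\<omega>. tau \<omega> * indicator {0<..} (tau \<omega>))"
    by (rule integrable_mult_bounded_comp[OF tau_int, of _ 1]) (auto simp: indicator_def)
  have "prob_space.expectation M (\<lambda>\<omega>. tau \<omega> / (1 + exp (- s * tau \<omega>)))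
         - prob_space.expectation M (\<lambda>\<omega>. tau \<omega> * indicator {0<..} (tau \<omega>))
      = (\<integral>\<omega>. tau \<omega> * (sigmoid (tau \<omega>) - indicator {0<..} (tau \<omega>)) \<partial>M)"
    using Bochner_Integration.integral_diff[OF sigmoid_int indicator_int]
    by (simp add: sigmoid_def right_diff_distrib)
  also have "\<dots> = - (\<integral>t. t * f t * (indicator {0<..} t - sigmoid t) \<partial>lborel)"
    using distributed_integral[OF distr, of "\<lambda>t. t * (sigmoid t - indicator {0<..} t)"] f_nonneg
    by (simp add: sigmoid_def algebra_simps flip: Bochner_Integration.integral_minus)
  also have "\<dots> = - (LBINT u:{0..}. logistic_density s u *
              ((LBINT t:{0..u}. t * f t) - (LBINT t:{-u..0}. t * f t)))"
    using distributed_integrable[OF distr, of "\<lambda>t. t"] f_nonneg tau_int s_pos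
    by (simp add: set_integral_logistic_mixture_signed_window sigmoid_def mult.commute)
  finally show ?thesis .
qed

end
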